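(* Let $(\mathcal{M},\times,1)$ be a cartesian monoidal category with equivalences. Let $(X,\xi):(\Delta,+,0)\to(\mathcal{M},\times,1)$ be a colax monoidal functor and let $Y:(\Delta^+)^{\mathrm{op}}\to\mathcal{M}$ be the functor corresponding to $(X,\xi)$ under the isomorphism described in the context. The following are equivalent: (1) $(X,\xi)$ is a homotopy monoid, i.e. $\xi_0$ and every $\xi_{m,n}$ are equivalences; (2) for all $m,n\ge0$ the map $(Y(\alpha^1_{m,n}),Y(\alpha^2_{m,n})):Y[m+n]\to Y[m]\times Y[n]$ is an equivalence, and so is the unique map $Y[0]\to1$; (3) for every $n\ge0$ the map $(Y(\beta^n_0),\dots,Y(\beta^n_{n-1})):Y[n]\to Y[1]^n$ is an equivalence.
   Context: A monoidal category with equivalences is a monoidal category with a class of morphisms (equivalences) containing all isomorphisms, satisfying two-out-of-three for composition, and closed under $\otimes$; cartesian means the monoidal structure is given by chosen finite products $\times$ and terminal object $1$. $\Delta$: objects $n=\{0,\dots,n-1\}$ ($n\ge0$), order-preserving maps, monoidal under ordinal sum $+$ with unit $0$. $\Delta^+$: objects $[n]=\{0,\dots,n\}$ ($n\ge0$), order-preserving maps. A colax monoidal functor $(X,\xi)$ consists of a functor $X$ with natural (not necessarily invertible) maps $\xi_{m,n}:X(m+n)\to X(m)\times X(n)$ and $\xi_0:X(0)\to1$ satisfying coassociativity and counit axioms. There is an isomorphism of categories between colax monoidal functors $(\Delta,+,0)\to(\mathcal{M},\times,1)$ and functors $(\Delta^+)^{\mathrm{op}}\to\mathcal{M}$ under which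 $(X,\xi)$ corresponds to a $Y$ with $Y[n]=X(n)$ for all $n$, and with $Y(\alpha^1_{m,n})$ and $Y(\alpha^2_{m,n})$ equal to the first and second components of $\xi_{m,n}$. Here $\alpha^1_{m,n}:[m]\to[m+n]$, $\alpha^1_{m,n}(i)=i$, and $\alpha^2_{m,n}:[n]\to[m+n]$, $\alpha^2_{m,n}(i)=m+i$; for $0\le j<n$, $\beta^n_j:[1]\to[n]$ is $\beta^n_j(i)=i+j$. *)

theory Defs
  imports Main
begin

text \<open>Objects are the elements of type 'o, arrows the elements of type 'a.
  cmp C g f is the composite g o f (meaningful when dom g = cod f).\<close>

record ('o, 'a) cmc =
  c_dom  :: "'a \<Rightarrow> 'o"
  c_cod  :: "'a \<Rightarrow> 'o"
  c_id   :: "'o \<Rightarrow> 'a"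
  c_cmp  :: "'a \<Rightarrow> 'a \<Rightarrow> 'a"
  c_prod :: "'o \<Rightarrow> 'o \<Rightarrow> 'o"
  c_pr1  :: "'o \<Rightarrow> 'o \<Rightarrow> 'a"
  c_pr2  :: "'o \<Rightarrow> 'o \<Rightarrow> 'a"
  c_pair :: "'a \<Rightarrow> 'a \<Rightarrow> 'a"
  c_one  :: "'o"
  c_bang :: "'o \<Rightarrow> 'a"
  c_eqv  :: "'a set"

definition is_category :: "('o, 'a, 'z) cmc_scheme \<Rightarrow> bool" where
  "is_category C \<longleftrightarrow>
     (\<forall>A. c_dom C (c_id C A) = A \<and> c_cod C (c_id C A) = A) \<and>
     (\<forall>f g. c_dom C g = c_cod C f \<longrightarrow>
        c_dom C (c_cmp C g f) = c_dom C f \<and> c_cod C (c_cmp C g f) = c_cod C g) \<and>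
     (\<forall>f. c_cmp C f (c_id C (c_dom C f)) = f \<and> c_cmp C (c_id C (c_cod C f)) f = f) \<and>
     (\<forall>f g h. c_dom C g = c_cod C f \<and> c_dom C h = c_cod C g \<longrightarrow>
        c_cmp C h (c_cmp C g f) = c_cmp C (c_cmp C h g) f)"

definition is_cartesian :: "('o, 'a, 'z) cmc_scheme \<Rightarrow> bool" where
  "is_cartesian C \<longleftrightarrow> is_category C \<and>
     (\<forall>A B. c_dom C (c_pr1 C A B) = c_prod C A B \<and> c_cod C (c_pr1 C A B) = A \<and>
            c_dom C (c_pr2 C A B) = c_prod C A B \<and> c_cod C (c_pr2 C A B) = B) \<and>
     (\<forall>f g. c_dom C f = c_dom C g \<longrightarrow>
        c_dom C (c_pair C f g) = c_dom C f \<and>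
        c_cod C (c_pair C f g) = c_prod C (c_cod C f) (c_cod C g) \<and>
        c_cmp C (c_pr1 C (c_cod C f) (c_cod C g)) (c_pair C f g) = f \<and>
        c_cmp C (c_pr2 C (c_cod C f) (c_cod C g)) (c_pair C f g) = g) \<and>
     (\<forall>h A B. c_cod C h = c_prod C A B \<longrightarrow>
        c_pair C (c_cmp C (c_pr1 C A B) h) (c_cmp C (c_pr2 C A B) h) = h) \<and>
     (\<forall>A. c_dom C (c_bang C A) = A \<and> c_cod C (c_bang C A) = c_one C) \<and>
     (\<forall>f. c_cod C f = c_one C \<longrightarrow> f = c_bang C (c_dom C f))"

definition c_iso :: "('o, 'a, 'z) cmc_scheme \<Rightarrow> 'a \<Rightarrow> bool" where
  "c_iso C f \<longleftrightarrow> (\<exists>g. c_dom C g = c_cod C f \<and> c_cod C g = c_dom C f \<and>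
      c_cmp C g f = c_id C (c_dom C f) \<and> c_cmp C f g = c_id C (c_cod C f))"

definition c_tensor :: "('o, 'a, 'z) cmc_scheme \<Rightarrow> 'a \<Rightarrow> 'a \<Rightarrow> 'a" where
  "c_tensor C f g = c_pair C (c_cmp C f (c_pr1 C (c_dom C f) (c_dom C g)))
                             (c_cmp C g (c_pr2 C (c_dom C f) (c_dom C g)))"

definition c_assoc :: "('o, 'a, 'z) cmc_scheme \<Rightarrow> 'o \<Rightarrow> 'o \<Rightarrow> 'o \<Rightarrow> 'a" where
  "c_assoc C A B D =
     c_pair C (c_pair C (c_pr1 C A (c_prod C B D))
                        (c_cmp C (c_pr1 C B D) (c_pr2 C A (c_prod C B D))))
              (c_cmp C (c_pr2 C B D) (c_pr2 C A (c_prod C B D)))"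

definition cartesian_with_equivalences :: "('o, 'a, 'z) cmc_scheme \<Rightarrow> bool" where
  "cartesian_with_equivalences C \<longleftrightarrow> is_cartesian C \<and>
     (\<forall>f. c_iso C f \<longrightarrow> f \<in> c_eqv C) \<and>
     (\<forall>f g. c_dom C g = c_cod C f \<longrightarrow>
        (f \<in> c_eqv C \<and> g \<in> c_eqv C \<longrightarrow> c_cmp C g f \<in> c_eqv C) \<and>
        (f \<in> c_eqv C \<and> c_cmp C g f \<in> c_eqv C \<longrightarrow> g \<in> c_eqv C) \<and>
        (g \<in> c_eqv C \<and> c_cmp C g f \<in> c_eqv C \<longrightarrow> f \<in> c_eqv C)) \<and>
     (\<forall>f g. f \<in> c_eqv C \<and> g \<in> c_eqv C \<longrightarrow> c_tensor C f g \<in> c_eqv C)"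

text \<open>Morphisms of \<Delta>: order-preserving maps n = {0..<n} \<rightarrow> m = {0..<m},
  represented by functions nat \<Rightarrow> nat (only values on {0..<n} matter).\<close>
definition delta_map :: "nat \<Rightarrow> nat \<Rightarrow> (nat \<Rightarrow> nat) \<Rightarrow> bool" where
  "delta_map m n f \<longleftrightarrow> (\<forall>i<m. f i < n) \<and> (\<forall>i j. i \<le> j \<and> j < m \<longrightarrow> f i \<le> f j)"

text \<open>Morphisms of \<Delta>^+: order-preserving maps [m] = {0..m} \<rightarrow> [n] = {0..n}.\<close>
definition deltap_map :: "nat \<Rightarrow> nat \<Rightarrow> (nat \<Rightarrow> nat) \<Rightarrow> bool" where
  "deltap_map m n f \<longleftrightarrow> (\<forall>i\<le>m. f i \<le> n) \<and> (\<forall>i j. i \<le> j \<and> j \<le> m \<longrightarrow> f i \<le> f j)"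

text \<open>A functor \<Delta> \<rightarrow> M: Xa m n f is the image of f : m \<rightarrow> n.\<close>
definition delta_functor :: "('o, 'a, 'z) cmc_scheme \<Rightarrow> (nat \<Rightarrow> 'o) \<Rightarrow>
    (nat \<Rightarrow> nat \<Rightarrow> (nat \<Rightarrow> nat) \<Rightarrow> 'a) \<Rightarrow> bool" where
  "delta_functor C Xo Xa \<longleftrightarrow>
     (\<forall>m n f. delta_map m n f \<longrightarrow> c_dom C (Xa m n f) = Xo m \<and> c_cod C (Xa m n f) = Xo n) \<and>
     (\<forall>m n f g. delta_map m n f \<and> (\<forall>i<m. f i = g i) \<longrightarrow> Xa m n f = Xa m n g) \<and>
     (\<forall>n. Xa n n id = c_id C (Xo n)) \<and>
     (\<forall>l m n f g. delta_map l m f \<and> delta_map m n g \<longrightarrow>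
        Xa l n (g \<circ> f) = c_cmp C (Xa m n g) (Xa l m f))"

text \<open>A functor (\<Delta>^+)^op \<rightarrow> M: Ya m n f is the image of f : [m] \<rightarrow> [n],
  an arrow Yo n \<rightarrow> Yo m.\<close>
definition deltap_op_functor :: "('o, 'a, 'z) cmc_scheme \<Rightarrow> (nat \<Rightarrow> 'o) \<Rightarrow>
    (nat \<Rightarrow> nat \<Rightarrow> (nat \<Rightarrow> nat) \<Rightarrow> 'a) \<Rightarrow> bool" where
  "deltap_op_functor C Yo Ya \<longleftrightarrow>
     (\<forall>m n f. deltap_map m n f \<longrightarrow> c_dom C (Ya m n f) = Yo n \<and> c_cod C (Ya m n f) = Yo m) \<and>
     (\<forall>m n f g. deltap_map m n f \<and> (\<forall>i\<le>m. f i = g i) \<longrightarrow> Ya m n f = Ya m n g) \<and>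
     (\<forall>n. Ya n n id = c_id C (Yo n)) \<and>
     (\<forall>l m n f g. deltap_map l m f \<and> deltap_map m n g \<longrightarrow>
        Ya l n (g \<circ> f) = c_cmp C (Ya l m f) (Ya m n g))"

definition osum :: "nat \<Rightarrow> nat \<Rightarrow> (nat \<Rightarrow> nat) \<Rightarrow> (nat \<Rightarrow> nat) \<Rightarrow> nat \<Rightarrow> nat" where
  "osum m m' f g = (\<lambda>i. if i < m then f i else m' + g (i - m))"

definition colax_monoidal :: "('o, 'a, 'z) cmc_scheme \<Rightarrow> (nat \<Rightarrow> 'o) \<Rightarrow>
    (nat \<Rightarrow> nat \<Rightarrow> (nat \<Rightarrow> nat) \<Rightarrow> 'a) \<Rightarrow> (nat \<Rightarrow> nat \<Rightarrow> 'a) \<Rightarrow> 'a \<Rightarrow> bool" where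
  "colax_monoidal C Xo Xa xi xi0 \<longleftrightarrow> delta_functor C Xo Xa \<and>
     (\<forall>m n. c_dom C (xi m n) = Xo (m + n) \<and> c_cod C (xi m n) = c_prod C (Xo m) (Xo n)) \<and>
     c_dom C xi0 = Xo 0 \<and> c_cod C xi0 = c_one C \<and>
     (\<forall>m n m' n' f g. delta_map m m' f \<and> delta_map n n' g \<longrightarrow>
        c_cmp C (c_tensor C (Xa m m' f) (Xa n n' g)) (xi m n) =
        c_cmp C (xi m' n') (Xa (m + n) (m' + n') (osum m m' f g))) \<and>
     (\<forall>l m n. c_cmp C (c_tensor C (xi l m) (c_id C (Xo n))) (xi (l + m) n) =
        c_cmp C (c_assoc C (Xo l) (Xo m) (Xo n))
           (c_cmp C (c_tensor C (c_id C (Xo l)) (xi m n)) (xi l (m + n)))) \<and>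
     (\<forall>n. c_cmp C (c_pr2 C (c_one C) (Xo n))
            (c_cmp C (c_tensor C xi0 (c_id C (Xo n))) (xi 0 n)) = c_id C (Xo n)) \<and>
     (\<forall>n. c_cmp C (c_pr1 C (Xo n) (c_one C))
            (c_cmp C (c_tensor C (c_id C (Xo n)) xi0) (xi n 0)) = c_id C (Xo n))"

definition alpha1 :: "nat \<Rightarrow> nat \<Rightarrow> nat \<Rightarrow> nat" where "alpha1 m n = (\<lambda>i. i)"
definition alpha2 :: "nat \<Rightarrow> nat \<Rightarrow> nat \<Rightarrow> nat" where "alpha2 m n = (\<lambda>i. m + i)"
definition beta :: "nat \<Rightarrow> nat \<Rightarrow> nat \<Rightarrow> nat" where "beta n j = (\<lambda>i. i + j)"

definition corresponds :: "('o, 'a, 'z) cmc_scheme \<Rightarrow> (nat \<Rightarrow> 'o) \<Rightarrow> (nat \<Rightarrow> nat \<Rightarrow> 'a) \<Rightarrow>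
    (nat \<Rightarrow> 'o) \<Rightarrow> (nat \<Rightarrow> nat \<Rightarrow> (nat \<Rightarrow> nat) \<Rightarrow> 'a) \<Rightarrow> bool" where
  "corresponds C Xo xi Yo Ya \<longleftrightarrow>
     (\<forall>n. Yo n = Xo n) \<and>
     (\<forall>m n. Ya m (m + n) (alpha1 m n) = c_cmp C (c_pr1 C (Xo m) (Xo n)) (xi m n) \<and>
            Ya n (m + n) (alpha2 m n) = c_cmp C (c_pr2 C (Xo m) (Xo n)) (xi m n))"

fun c_pow :: "('o, 'a, 'z) cmc_scheme \<Rightarrow> 'o \<Rightarrow> nat \<Rightarrow> 'o" where
  "c_pow C A 0 = c_one C"
| "c_pow C A (Suc 0) = A"
| "c_pow C A (Suc (Suc n)) = c_prod C A (c_pow C A (Suc n))"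

fun c_tuple :: "('o, 'a, 'z) cmc_scheme \<Rightarrow> 'o \<Rightarrow> (nat \<Rightarrow> 'a) \<Rightarrow> nat \<Rightarrow> 'a" where
  "c_tuple C B fs 0 = c_bang C B"
| "c_tuple C B fs (Suc 0) = fs 0"
| "c_tuple C B fs (Suc (Suc n)) = c_pair C (fs 0) (c_tuple C B (\<lambda>i. fs (Suc i)) (Suc n))"

end

theory Submission
  imports Defs
begin

text \<open>Conditions (1) and (2) agree because the pair of the two faces
  \<open>Y(\<alpha>1(m,n))\<close> and \<open>Y(\<alpha>2(m,n))\<close> is \<open>\<xi>(m,n)\<close> itself, by the universal
  property of the product, and \<open>Y[0] \<rightarrow> 1\<close> is \<open>\<xi>0\<close>. For (3), the Segal maps satisfy
  \<open>s 0 = \<xi>0\<close>, \<open>s 1 = id\<close> and \<open>s (n + 2) = (id \<times> s (n + 1)) \<circ> \<xi>(1, n + 1)\<close>,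
  so they are equivalences for a homotopy monoid. Conversely, two-out-of-three makes
  \<open>\<xi>0\<close> and every \<open>\<xi>(1,n)\<close> an equivalence (\<open>\<xi>(1,0)\<close> through the counit law), and
  coassociativity, which expresses \<open>\<xi>(1 + m, n)\<close> through \<open>\<xi>(1,m)\<close>, \<open>\<xi>(m,n)\<close> and
  \<open>\<xi>(1, m + n)\<close>, then gives every \<open>\<xi>(m,n)\<close> by induction on \<open>m\<close>.\<close>

locale cartesian =
  fixes C :: "('o, 'a, 'z) cmc_scheme"
  assumes cartesian: "is_cartesian C"
begin

lemma category: "is_category C"
  using cartesian unfolding is_cartesian_def by simp

lemma id_dom [simp]: "c_dom C (c_id C A) = A"
  and id_cod [simp]: "c_cod C (c_id C A) = A"
  using category unfolding is_category_def by auto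

lemma cmp_dom [simp]: "c_dom C g = c_cod C f \<Longrightarrow> c_dom C (c_cmp C g f) = c_dom C f"
  and cmp_cod [simp]: "c_dom C g = c_cod C f \<Longrightarrow> c_cod C (c_cmp C g f) = c_cod C g"
  using category unfolding is_category_def by auto

lemma cmp_id_right [simp]: "c_dom C f = A \<Longrightarrow> c_cmp C f (c_id C A) = f"
  and cmp_id_left [simp]: "c_cod C f = A \<Longrightarrow> c_cmp C (c_id C A) f = f"
  using category unfolding is_category_def by auto

lemma cmp_assoc:
  "c_dom C g = c_cod C f \<Longrightarrow> c_dom C h = c_cod C g \<Longrightarrow>
   c_cmp C h (c_cmp C g f) = c_cmp C (c_cmp C h g) f"
  using category unfolding is_category_def by auto

lemma pr_dom_cod [simp]:
  "c_dom C (c_pr1 C A B) = c_prod C A B" "c_cod C (c_pr1 C A B) = A"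
  "c_dom C (c_pr2 C A B) = c_prod C A B" "c_cod C (c_pr2 C A B) = B"
  using cartesian unfolding is_cartesian_def by auto

lemma pair_dom [simp]: "c_dom C f = c_dom C g \<Longrightarrow> c_dom C (c_pair C f g) = c_dom C f"
  and pair_cod [simp]:
    "c_dom C f = c_dom C g \<Longrightarrow> c_cod C (c_pair C f g) = c_prod C (c_cod C f) (c_cod C g)"
  using cartesian unfolding is_cartesian_def by auto

lemma pr1_pair [simp]:
  "c_dom C f = c_dom C g \<Longrightarrow> c_cod C f = A \<Longrightarrow> c_cod C g = B \<Longrightarrow>
   c_cmp C (c_pr1 C A B) (c_pair C f g) = f"
  and pr2_pair [simp]:
  "c_dom C f = c_dom C g \<Longrightarrow> c_cod C f = A \<Longrightarrow> c_cod C g = B \<Longrightarrow>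
   c_cmp C (c_pr2 C A B) (c_pair C f g) = g"
  using cartesian unfolding is_cartesian_def by auto

lemma pair_eta:
  "c_cod C h = c_prod C A B \<Longrightarrow> c_pair C (c_cmp C (c_pr1 C A B) h) (c_cmp C (c_pr2 C A B) h) = h"
  using cartesian unfolding is_cartesian_def by auto

lemma prod_arrow_eqI:
  "c_cod C h = c_prod C A B \<Longrightarrow> c_cod C k = c_prod C A B \<Longrightarrow>
   c_cmp C (c_pr1 C A B) h = c_cmp C (c_pr1 C A B) k \<Longrightarrow>
   c_cmp C (c_pr2 C A B) h = c_cmp C (c_pr2 C A B) k \<Longrightarrow> h = k"
  by (metis pair_eta)

lemma bang_dom_cod [simp]: "c_dom C (c_bang C A) = A" "c_cod C (c_bang C A) = c_one C"
  using cartesian unfolding is_cartesian_def by auto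

lemma bang_unique: "c_cod C f = c_one C \<Longrightarrow> f = c_bang C (c_dom C f)"
  using cartesian unfolding is_cartesian_def by auto

lemma bang_cmp: "c_cmp C (c_bang C (c_cod C f)) f = c_bang C (c_dom C f)"
  by (metis bang_unique bang_dom_cod cmp_cod cmp_dom)

lemma pair_cmp:
  assumes "c_dom C f = c_dom C g" and "c_dom C f = c_cod C h"
  shows "c_cmp C (c_pair C f g) h = c_pair C (c_cmp C f h) (c_cmp C g h)"
proof -
  let ?A = "c_cod C f" and ?B = "c_cod C g"
  have "c_cod C (c_cmp C (c_pair C f g) h) = c_prod C ?A ?B"
    using assms by simp
  then have "c_cmp C (c_pair C f g) h =
      c_pair C (c_cmp C (c_pr1 C ?A ?B) (c_cmp C (c_pair C f g) h))
               (c_cmp C (c_pr2 C ?A ?B) (c_cmp C (c_pair C f g) h))"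
    by (simp add: pair_eta)
  also have "\<dots> = c_pair C (c_cmp C f h) (c_cmp C g h)"
    using assms by (simp add: cmp_assoc)
  finally show ?thesis .
qed

lemma tensor_dom_cod [simp]:
  "c_dom C (c_tensor C f g) = c_prod C (c_dom C f) (c_dom C g)"
  "c_cod C (c_tensor C f g) = c_prod C (c_cod C f) (c_cod C g)"
  unfolding c_tensor_def by simp_all

lemma tensor_pair:
  "c_dom C f = c_cod C h \<Longrightarrow> c_dom C g = c_cod C k \<Longrightarrow> c_dom C h = c_dom C k \<Longrightarrow>
   c_cmp C (c_tensor C f g) (c_pair C h k) = c_pair C (c_cmp C f h) (c_cmp C g k)"
  unfolding c_tensor_def by (simp add: pair_cmp flip: cmp_assoc)

lemma assoc_dom_cod [simp]:
  "c_dom C (c_assoc C A B D) = c_prod C A (c_prod C B D)"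
  "c_cod C (c_assoc C A B D) = c_prod C (c_prod C A B) D"
  unfolding c_assoc_def by simp_all

lemma c_isoI:
  "c_dom C g = c_cod C f \<Longrightarrow> c_cod C g = c_dom C f \<Longrightarrow>
   c_cmp C g f = c_id C (c_dom C f) \<Longrightarrow> c_cmp C f g = c_id C (c_cod C f) \<Longrightarrow> c_iso C f"
  unfolding c_iso_def by blast

lemma iso_id: "c_iso C (c_id C A)"
  by (rule c_isoI[of "c_id C A"]) simp_all

lemma id_prod_eq_pair_pr: "c_id C (c_prod C A B) = c_pair C (c_pr1 C A B) (c_pr2 C A B)"
  using pair_eta[of "c_id C (c_prod C A B)" A B] by simp

lemma iso_pr1_one: "c_iso C (c_pr1 C A (c_one C))"
proof (rule c_isoI[of "c_pair C (c_id C A) (c_bang C A)"])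
  have "c_cmp C (c_bang C A) (c_pr1 C A (c_one C)) = c_pr2 C A (c_one C)"
    by (metis bang_unique bang_dom_cod pr_dom_cod cmp_cod cmp_dom)
  then show "c_cmp C (c_pair C (c_id C A) (c_bang C A)) (c_pr1 C A (c_one C)) =
      c_id C (c_dom C (c_pr1 C A (c_one C)))"
    by (simp add: pair_cmp id_prod_eq_pair_pr)
qed simp_all

lemma iso_pr2_one: "c_iso C (c_pr2 C (c_one C) A)"
proof (rule c_isoI[of "c_pair C (c_bang C A) (c_id C A)"])
  have "c_cmp C (c_bang C A) (c_pr2 C (c_one C) A) = c_pr1 C (c_one C) A"
    by (metis bang_unique bang_dom_cod pr_dom_cod cmp_cod cmp_dom)
  then show "c_cmp C (c_pair C (c_bang C A) (c_id C A)) (c_pr2 C (c_one C) A) =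
      c_id C (c_dom C (c_pr2 C (c_one C) A))"
    by (simp add: pair_cmp id_prod_eq_pair_pr)
qed simp_all

lemma iso_assoc: "c_iso C (c_assoc C A B D)"
proof (rule c_isoI)
  let ?inv = "c_pair C (c_cmp C (c_pr1 C A B) (c_pr1 C (c_prod C A B) D))
     (c_pair C (c_cmp C (c_pr2 C A B) (c_pr1 C (c_prod C A B) D)) (c_pr2 C (c_prod C A B) D))"
  show "c_cmp C ?inv (c_assoc C A B D) = c_id C (c_dom C (c_assoc C A B D))"
    by (rule prod_arrow_eqI[where A = A and B = "c_prod C B D"])
      (simp_all add: c_assoc_def pair_cmp pair_eta flip: cmp_assoc)
  show "c_cmp C (c_assoc C A B D) ?inv = c_id C (c_cod C (c_assoc C A B D))"
    by (rule prod_arrow_eqI[where A = "c_prod C A B" and B = D])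
      (simp_all add: c_assoc_def pair_cmp pair_eta flip: cmp_assoc)
qed simp_all

lemma tuple_dom:
  "(\<And>j. j < n \<Longrightarrow> c_dom C (fs j) = B) \<Longrightarrow> c_dom C (c_tuple C B fs n) = B"
proof (induction n arbitrary: fs rule: induct_nat_012)
  case (ge2 n)
  have "c_dom C (c_tuple C B (\<lambda>i. fs (Suc i)) (Suc n)) = B"
    by (rule ge2.IH(2)) (simp add: ge2.prems)
  with ge2.prems show ?case by simp
qed simp_all

lemma tuple_cong:
  "(\<And>j. j < n \<Longrightarrow> fs j = gs j) \<Longrightarrow> c_tuple C B fs n = c_tuple C B gs n"
proof (induction n arbitrary: fs gs rule: induct_nat_012)
  case (ge2 n)
  have "c_tuple C B (\<lambda>i. fs (Suc i)) (Suc n) = c_tuple C B (\<lambda>i. gs (Suc i)) (Suc n)"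
    by (rule ge2.IH(2)) (simp add: ge2.prems)
  with ge2.prems show ?case by simp
qed simp_all

lemma tuple_cmp:
  "(\<And>j. j < n \<Longrightarrow> c_dom C (fs j) = B) \<Longrightarrow> c_cod C h = B \<Longrightarrow>
   c_cmp C (c_tuple C B fs n) h = c_tuple C (c_dom C h) (\<lambda>j. c_cmp C (fs j) h) n"
proof (induction n arbitrary: fs rule: induct_nat_012)
  case 0
  then show ?case using bang_cmp[of h] by simp
next
  case 1
  then show ?case by simp
next
  case (ge2 n)
  have "c_dom C (c_tuple C B (\<lambda>i. fs (Suc i)) (Suc n)) = B"
    by (rule tuple_dom) (simp add: ge2.prems)
  moreover have "c_cmp C (c_tuple C B (\<lambda>i. fs (Suc i)) (Suc n)) h =
      c_tuple C (c_dom C h) (\<lambda>i. c_cmp C (fs (Suc i)) h) (Suc n)"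
    by (rule ge2.IH(2)) (simp_all add: ge2.prems)
  ultimately show ?case
    using ge2.prems by (simp add: pair_cmp)
qed

end

locale cartesian_eqv =
  fixes C :: "('o, 'a, 'z) cmc_scheme"
  assumes cartesian_eqv: "cartesian_with_equivalences C"
begin

sublocale cartesian
  using cartesian_eqv unfolding cartesian_with_equivalences_def by unfold_locales simp

lemma eqv_of_iso: "c_iso C f \<Longrightarrow> f \<in> c_eqv C"
  using cartesian_eqv unfolding cartesian_with_equivalences_def by blast

lemma eqv_id: "c_id C A \<in> c_eqv C"
  by (rule eqv_of_iso[OF iso_id])

lemma eqv_cmp:
  "c_dom C g = c_cod C f \<Longrightarrow> f \<in> c_eqv C \<Longrightarrow> g \<in> c_eqv C \<Longrightarrow> c_cmp C g f \<in> c_eqv C"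
  using cartesian_eqv unfolding cartesian_with_equivalences_def by blast

lemma eqv_cancel_left:
  "c_dom C g = c_cod C f \<Longrightarrow> g \<in> c_eqv C \<Longrightarrow> c_cmp C g f \<in> c_eqv C \<Longrightarrow> f \<in> c_eqv C"
  using cartesian_eqv unfolding cartesian_with_equivalences_def by blast

lemma eqv_tensor: "f \<in> c_eqv C \<Longrightarrow> g \<in> c_eqv C \<Longrightarrow> c_tensor C f g \<in> c_eqv C"
  using cartesian_eqv unfolding cartesian_with_equivalences_def by blast

lemma eqv_of_section:
  "c_dom C r = c_cod C f \<Longrightarrow> r \<in> c_eqv C \<Longrightarrow> c_cmp C r f = c_id C A \<Longrightarrow> f \<in> c_eqv C"
  by (metis eqv_cancel_left eqv_id)

end

locale colax_delta = cartesian_eqv C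
  for C :: "('o, 'a, 'z) cmc_scheme" +
  fixes Xo :: "nat \<Rightarrow> 'o" and Xa :: "nat \<Rightarrow> nat \<Rightarrow> (nat \<Rightarrow> nat) \<Rightarrow> 'a"
    and xi :: "nat \<Rightarrow> nat \<Rightarrow> 'a" and xi0 :: "'a"
  assumes colax: "colax_monoidal C Xo Xa xi xi0"
begin

definition homotopy_monoid :: bool where
  "homotopy_monoid \<longleftrightarrow> xi0 \<in> c_eqv C \<and> (\<forall>m n. xi m n \<in> c_eqv C)"

lemma xi_dom [simp]: "c_dom C (xi m n) = Xo (m + n)"
  and xi_cod [simp]: "c_cod C (xi m n) = c_prod C (Xo m) (Xo n)"
  and xi0_dom [simp]: "c_dom C xi0 = Xo 0"
  and xi0_cod [simp]: "c_cod C xi0 = c_one C"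
  using colax unfolding colax_monoidal_def by auto

lemma xi0_eq_bang: "xi0 = c_bang C (Xo 0)"
  using bang_unique[OF xi0_cod] by simp

lemma xi_coassoc:
  "c_cmp C (c_tensor C (xi l m) (c_id C (Xo n))) (xi (l + m) n) =
   c_cmp C (c_assoc C (Xo l) (Xo m) (Xo n)) (c_cmp C (c_tensor C (c_id C (Xo l)) (xi m n)) (xi l (m + n)))"
  using colax unfolding colax_monoidal_def by blast

lemma xi_counit_left:
  "c_cmp C (c_cmp C (c_pr2 C (c_one C) (Xo n)) (c_tensor C xi0 (c_id C (Xo n)))) (xi 0 n) = c_id C (Xo n)"
  using colax unfolding colax_monoidal_def by (simp add: cmp_assoc)

lemma xi_counit_right:
  "c_cmp C (c_cmp C (c_pr1 C (Xo n) (c_one C)) (c_tensor C (c_id C (Xo n)) xi0)) (xi n 0) = c_id C (Xo n)"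
  using colax unfolding colax_monoidal_def by (simp add: cmp_assoc)

text \<open>By the counit laws, \<open>xi 0 n\<close> and \<open>xi n 0\<close> are sections of
  equivalences once \<open>xi0\<close> is one.\<close>

lemma eqv_xi_0_left: "xi0 \<in> c_eqv C \<Longrightarrow> xi 0 n \<in> c_eqv C"
  by (rule eqv_of_section[OF _ _ xi_counit_left])
    (simp_all add: eqv_cmp eqv_tensor eqv_id eqv_of_iso iso_pr2_one)

lemma eqv_xi_0_right: "xi0 \<in> c_eqv C \<Longrightarrow> xi n 0 \<in> c_eqv C"
  by (rule eqv_of_section[OF _ _ xi_counit_right])
    (simp_all add: eqv_cmp eqv_tensor eqv_id eqv_of_iso iso_pr1_one)

lemma homotopy_monoidI:
  assumes xi0: "xi0 \<in> c_eqv C" and xi_1: "\<And>n. xi 1 n \<in> c_eqv C"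
  shows homotopy_monoid
proof -
  have "xi m n \<in> c_eqv C" for m n
  proof (induction m arbitrary: n)
    case 0
    show ?case using xi0 by (rule eqv_xi_0_left)
  next
    case (Suc m)
    have "c_cmp C (c_tensor C (xi 1 m) (c_id C (Xo n))) (xi (1 + m) n) \<in> c_eqv C"
      unfolding xi_coassoc
      by (intro eqv_cmp eqv_tensor eqv_id xi_1 Suc.IH eqv_of_iso iso_assoc) simp_all
    with eqv_tensor[OF xi_1 eqv_id] have "xi (1 + m) n \<in> c_eqv C"
      by (rule eqv_cancel_left[rotated]) simp
    then show ?case by simp
  qed
  with xi0 show ?thesis unfolding homotopy_monoid_def by blast
qed

end

locale colax_delta_correspondence = colax_delta C Xo Xa xi xi0
  for C :: "('o, 'a, 'z) cmc_scheme"
    and Xo :: "nat \<Rightarrow> 'o" and Xa :: "nat \<Rightarrow> nat \<Rightarrow> (nat \<Rightarrow> nat) \<Rightarrow> 'a"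
    and xi :: "nat \<Rightarrow> nat \<Rightarrow> 'a" and xi0 :: "'a" +
  fixes Yo :: "nat \<Rightarrow> 'o" and Ya :: "nat \<Rightarrow> nat \<Rightarrow> (nat \<Rightarrow> nat) \<Rightarrow> 'a"
  assumes Y_functor: "deltap_op_functor C Yo Ya"
    and corresponds: "corresponds C Xo xi Yo Ya"
begin

lemma Yo_eq_Xo: "Yo n = Xo n"
  using corresponds unfolding corresponds_def by auto

lemma Ya_alpha1: "Ya m (m + n) (alpha1 m n) = c_cmp C (c_pr1 C (Xo m) (Xo n)) (xi m n)"
  and Ya_alpha2: "Ya n (m + n) (alpha2 m n) = c_cmp C (c_pr2 C (Xo m) (Xo n)) (xi m n)"
  using corresponds unfolding corresponds_def by auto

lemma Ya_dom: "deltap_map m n f \<Longrightarrow> c_dom C (Ya m n f) = Xo n"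
  using Y_functor Yo_eq_Xo unfolding deltap_op_functor_def by auto

lemma Ya_id: "Ya n n id = c_id C (Xo n)"
  using Y_functor Yo_eq_Xo unfolding deltap_op_functor_def by auto

lemma Ya_comp:
  "deltap_map l m f \<Longrightarrow> deltap_map m n g \<Longrightarrow> Ya l n (g \<circ> f) = c_cmp C (Ya l m f) (Ya m n g)"
  using Y_functor unfolding deltap_op_functor_def by blast

lemma pair_Ya_alpha_eq_xi: "c_pair C (Ya m (m + n) (alpha1 m n)) (Ya n (m + n) (alpha2 m n)) = xi m n"
  unfolding Ya_alpha1 Ya_alpha2 by (rule pair_eta) (rule xi_cod)

lemma homotopy_monoid_iff_eqv_pair_alpha:
  "homotopy_monoid \<longleftrightarrow>
     (\<forall>m n. c_pair C (Ya m (m + n) (alpha1 m n)) (Ya n (m + n) (alpha2 m n)) \<in> c_eqv C)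
     \<and> c_bang C (Yo 0) \<in> c_eqv C"
  unfolding homotopy_monoid_def pair_Ya_alpha_eq_xi Yo_eq_Xo xi0_eq_bang[symmetric] by blast

lemma deltap_map_beta: "j < n \<Longrightarrow> deltap_map 1 n (beta n j)"
  unfolding deltap_map_def beta_def by auto

definition segal_map :: "nat \<Rightarrow> 'a" where
  "segal_map n = c_tuple C (Yo n) (\<lambda>j. Ya 1 n (beta n j)) n"

lemma segal_map_dom: "c_dom C (segal_map n) = Xo n"
  unfolding segal_map_def Yo_eq_Xo by (rule tuple_dom) (rule Ya_dom, erule deltap_map_beta)

lemma segal_map_0: "segal_map 0 = xi0"
  unfolding segal_map_def Yo_eq_Xo xi0_eq_bang by simp

lemma segal_map_1: "segal_map 1 = c_id C (Xo 1)"
proof -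
  have "beta 1 0 = id"
    by (auto simp: beta_def)
  then show ?thesis
    unfolding segal_map_def by (simp add: Ya_id)
qed

lemma Ya_beta_shift:
  assumes "j < n"
  shows "Ya 1 (m + n) (beta (m + n) (m + j)) =
    c_cmp C (Ya 1 n (beta n j)) (c_cmp C (c_pr2 C (Xo m) (Xo n)) (xi m n))"
proof -
  have "beta (m + n) (m + j) = alpha2 m n \<circ> beta n j"
    by (auto simp: alpha2_def beta_def)
  moreover have "deltap_map n (m + n) (alpha2 m n)"
    by (auto simp: alpha2_def deltap_map_def)
  ultimately show ?thesis
    using Ya_comp[OF deltap_map_beta[OF assms]] by (simp add: Ya_alpha2)
qed

lemma segal_map_Suc_Suc:
  "segal_map (Suc (Suc n)) =
   c_cmp C (c_tensor C (c_id C (Xo 1)) (segal_map (Suc n))) (xi 1 (Suc n))"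
proof -
  let ?x = "xi 1 (Suc n)"
  let ?p1 = "c_cmp C (c_pr1 C (Xo 1) (Xo (Suc n))) ?x"
  let ?p2 = "c_cmp C (c_pr2 C (Xo 1) (Xo (Suc n))) ?x"
  have head: "Ya 1 (Suc (Suc n)) (beta (Suc (Suc n)) 0) = ?p1"
    using Ya_alpha1[of 1 "Suc n"] by (simp add: alpha1_def beta_def)
  have p2_dom: "c_dom C ?p2 = Xo (Suc (Suc n))"
    by simp
  have "c_cmp C (segal_map (Suc n)) ?p2 =
      c_tuple C (c_dom C ?p2) (\<lambda>j. c_cmp C (Ya 1 (Suc n) (beta (Suc n) j)) ?p2) (Suc n)"
    unfolding segal_map_def Yo_eq_Xo
    by (rule tuple_cmp[OF Ya_dom[OF deltap_map_beta]]) simp_all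
  also have "\<dots> =
      c_tuple C (Xo (Suc (Suc n))) (\<lambda>j. Ya 1 (Suc (Suc n)) (beta (Suc (Suc n)) (Suc j))) (Suc n)"
    unfolding p2_dom by (rule tuple_cong) (use Ya_beta_shift[of _ "Suc n" 1] in simp)
  finally have tail: "c_tuple C (Xo (Suc (Suc n)))
      (\<lambda>j. Ya 1 (Suc (Suc n)) (beta (Suc (Suc n)) (Suc j))) (Suc n) = c_cmp C (segal_map (Suc n)) ?p2"
    by simp
  have "segal_map (Suc (Suc n)) = c_pair C (Ya 1 (Suc (Suc n)) (beta (Suc (Suc n)) 0))
      (c_tuple C (Xo (Suc (Suc n))) (\<lambda>j. Ya 1 (Suc (Suc n)) (beta (Suc (Suc n)) (Suc j))) (Suc n))"
    unfolding segal_map_def Yo_eq_Xo by (simp only: c_tuple.simps)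
  also have "\<dots> = c_pair C (c_cmp C (c_id C (Xo 1)) ?p1) (c_cmp C (segal_map (Suc n)) ?p2)"
    unfolding head tail by simp
  also have "\<dots> = c_cmp C (c_tensor C (c_id C (Xo 1)) (segal_map (Suc n))) (c_pair C ?p1 ?p2)"
    by (rule tensor_pair[symmetric]) (simp_all add: segal_map_dom)
  also have "c_pair C ?p1 ?p2 = ?x"
    by (rule pair_eta) simp
  finally show ?thesis .
qed

lemma eqv_segal_map: "homotopy_monoid \<Longrightarrow> segal_map n \<in> c_eqv C"
proof (induction n rule: induct_nat_012)
  case 0
  then show ?case by (simp add: segal_map_0 homotopy_monoid_def)
next
  case 1
  show ?case
    unfolding One_nat_def[symmetric] segal_map_1 by (rule eqv_id)
next
  case (ge2 n)
  have "xi 1 (Suc n) \<in> c_eqv C" and "segal_map (Suc n) \<in> c_eqv C"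
    using ge2 unfolding homotopy_monoid_def by blast+
  then show ?case
    unfolding segal_map_Suc_Suc by (intro eqv_cmp eqv_tensor eqv_id) (simp_all add: segal_map_dom)
qed

lemma eqv_xi_1_of_eqv_segal_map:
  assumes segal: "\<And>n. segal_map n \<in> c_eqv C"
  shows "xi 1 n \<in> c_eqv C"
proof (cases n)
  case 0
  then show ?thesis
    using eqv_xi_0_right segal[of 0] by (simp add: segal_map_0)
next
  case (Suc k)
  have "c_cmp C (c_tensor C (c_id C (Xo 1)) (segal_map (Suc k))) (xi 1 (Suc k)) \<in> c_eqv C"
    using segal[of "Suc (Suc k)"] by (simp add: segal_map_Suc_Suc)
  then have "xi 1 (Suc k) \<in> c_eqv C"
    by (rule eqv_cancel_left[rotated 2]) (simp_all add: segal_map_dom eqv_tensor eqv_id segal)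
  with Suc show ?thesis by simp
qed

lemma homotopy_monoid_iff_eqv_segal_map: "homotopy_monoid \<longleftrightarrow> (\<forall>n. segal_map n \<in> c_eqv C)"
proof
  assume segal: "\<forall>n. segal_map n \<in> c_eqv C"
  show homotopy_monoid
  proof (rule homotopy_monoidI)
    show "xi0 \<in> c_eqv C"
      using segal segal_map_0 by metis
    show "xi 1 n \<in> c_eqv C" for n
      using segal by (intro eqv_xi_1_of_eqv_segal_map) blast
  qed
qed (use eqv_segal_map in blast)

end

theorem proposition3p1p8:
  fixes C :: "('o, 'a, 'z) cmc_scheme"
    and Xo :: "nat \<Rightarrow> 'o" and Xa :: "nat \<Rightarrow> nat \<Rightarrow> (nat \<Rightarrow> nat) \<Rightarrow> 'a"
    and xi :: "nat \<Rightarrow> nat \<Rightarrow> 'a" and xi0 :: "'a"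
    and Yo :: "nat \<Rightarrow> 'o" and Ya :: "nat \<Rightarrow> nat \<Rightarrow> (nat \<Rightarrow> nat) \<Rightarrow> 'a"
  assumes "cartesian_with_equivalences C"
    and "colax_monoidal C Xo Xa xi xi0"
    and "deltap_op_functor C Yo Ya"
    and "corresponds C Xo xi Yo Ya"
  shows "((xi0 \<in> c_eqv C \<and> (\<forall>m n. xi m n \<in> c_eqv C))
           \<longleftrightarrow> ((\<forall>m n. c_pair C (Ya m (m + n) (alpha1 m n)) (Ya n (m + n) (alpha2 m n)) \<in> c_eqv C)
                \<and> c_bang C (Yo 0) \<in> c_eqv C))
       \<and> ((xi0 \<in> c_eqv C \<and> (\<forall>m n. xi m n \<in> c_eqv C))
           \<longleftrightarrow> (\<forall>n. c_tuple C (Yo n) (\<lambda>j. Ya 1 n (beta n j)) n \<in> c_eqv C))"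
proof -
  interpret colax_delta_correspondence C Xo Xa xi xi0 Yo Ya
    using assms by unfold_locales
  note homotopy_monoid_iff_eqv_pair_alpha
  moreover have "homotopy_monoid \<longleftrightarrow> (\<forall>n. c_tuple C (Yo n) (\<lambda>j. Ya 1 n (beta n j)) n \<in> c_eqv C)"
    using homotopy_monoid_iff_eqv_segal_map unfolding segal_map_def .
  ultimately show ?thesis
    unfolding homotopy_monoid_def by (rule conjI)
qed

end
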